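(* Let $B$ be a monoid, let $r\ge1$, let $A=B\langle x_0,\dots,x_r\rangle$ and $X=\operatorname{MProj}(A)$. Then for every integer $n$, $\Gamma_*(\mathcal{O}_X(n))=A(n)$ as graded $A$-modules, where $\Gamma_*(\mathcal{F})=\bigoplus_{m\in\mathbb{Z}}\Gamma(X,\mathcal{F}(m))$.
   Context: A monoid is a commutative associative monoid with identity $1$ and absorbing element $0$; modules over it are pointed sets with a compatible action, and $\bigoplus$ denotes wedge sum. $B\langle x_0,\dots,x_r\rangle$ is the graded monoid with $A_0=B$ and $A_n=\{b\,x_0^{i_0}\cdots x_r^{i_r}: b\in B,\ i_j\ge0,\ \sum i_j=n\}$ (so $A_n$ consists only of $0$ for $n<0$), with the obvious multiplication. $X=\operatorname{MProj}(A)$ is the set of prime ideals not containing $A_{\ge1}$, covered by $D_+(x_i)\cong\operatorname{MSpec}(A_{(x_i)})$, where $A_{(f)}$ is the degree-$0$ part of the localization $A_f$. $A(n)$ is the graded module with $A(n)_i=A_{i+n}$, $\mathcal{O}_X(n)=\widetilde{A(n)}$ (sections on $D_+(f)$ are the degree-$n$ elements of $A_f$), and $\mathcal{F}(m)=\mathcal{F}\otimes_{\mathcal{O}_X}\mathcal{O}_X(m)$. $\Gamma_*(\mathcal{F})$ is the graded $A$-module with $\Gamma(X,\mathcal{F}(m))$ in degree $m$, where $a\in A_i$ acts via $a\in\Gamma(X,\mathcal O_X(i))$ and $\mathcal F(m)\otimes\mathcal O_X(i)\cong\mathcal F(m+i)$. *)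

theory Defs
  imports Main
begin

text \<open>
  Monoid B: commutative monoid with absorbing zero, i.e. type class comm_monoid_mult + mult_zero.
  Elements of A = B<x_0..x_r> are represented as pairs (b, alpha) with alpha an exponent vector
  supported on {0..r}; all pairs with b = 0 are normalised to the single zero element (0, 0).
\<close>

type_synonym 'b melem = "'b \<times> (nat \<Rightarrow> nat)"

definition Acar :: "nat \<Rightarrow> ('b::{comm_monoid_mult,mult_zero}) melem set" where
  "Acar r = {(b, \<alpha>). (\<forall>i>r. \<alpha> i = 0) \<and> (b = 0 \<longrightarrow> \<alpha> = (\<lambda>_. 0))}"

definition azero :: "('b::{comm_monoid_mult,mult_zero}) melem" where
  "azero = (0, \<lambda>_. 0)"

definition aone :: "('b::{comm_monoid_mult,mult_zero}) melem" where
  "aone = (1, \<lambda>_. 0)"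

definition amul :: "('b::{comm_monoid_mult,mult_zero}) melem \<Rightarrow> 'b melem \<Rightarrow> 'b melem" where
  "amul x y = (if fst x * fst y = 0 then azero
               else (fst x * fst y, \<lambda>i. snd x i + snd y i))"

text \<open>a lies in the homogeneous part A_d (d an integer); 0 lies in every A_d,
  so A_d = {0} for d < 0.\<close>
definition hdeg :: "nat \<Rightarrow> int \<Rightarrow> ('b::{comm_monoid_mult,mult_zero}) melem \<Rightarrow> bool" where
  "hdeg r d a \<longleftrightarrow> a \<in> Acar r \<and> (fst a = 0 \<or> int (sum (snd a) {0..r}) = d)"

definition Apos :: "nat \<Rightarrow> ('b::{comm_monoid_mult,mult_zero}) melem set" where
  "Apos r = {a. \<exists>d::int. d \<ge> 1 \<and> hdeg r d a}"

definition is_ideal :: "nat \<Rightarrow> ('b::{comm_monoid_mult,mult_zero}) melem set \<Rightarrow> bool" where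
  "is_ideal r P \<longleftrightarrow> P \<subseteq> Acar r \<and> azero \<in> P \<and> (\<forall>a\<in>Acar r. \<forall>p\<in>P. amul a p \<in> P)"

definition is_prime :: "nat \<Rightarrow> ('b::{comm_monoid_mult,mult_zero}) melem set \<Rightarrow> bool" where
  "is_prime r P \<longleftrightarrow> is_ideal r P \<and> aone \<notin> P \<and>
     (\<forall>a\<in>Acar r. \<forall>b\<in>Acar r. amul a b \<in> P \<longrightarrow> a \<in> P \<or> b \<in> P)"

text \<open>MProj(A): primes not containing A_{\<ge>1} (every ideal of A is homogeneous).\<close>
definition MProj :: "nat \<Rightarrow> ('b::{comm_monoid_mult,mult_zero}) melem set set" where
  "MProj r = {P. is_prime r P \<and> \<not> Apos r \<subseteq> P}"

definition is_open :: "nat \<Rightarrow> ('b::{comm_monoid_mult,mult_zero}) melem set set \<Rightarrow> bool" where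
  "is_open r U \<longleftrightarrow> (\<exists>S \<subseteq> Acar r. U = {P \<in> MProj r. \<not> S \<subseteq> P})"

text \<open>Element of the stalk (A(n))_(P): the class of the fraction a/f, where f \<notin> P is
  homogeneous of degree d and a has degree d + n.\<close>
definition frac_class :: "nat \<Rightarrow> int \<Rightarrow> ('b::{comm_monoid_mult,mult_zero}) melem set
     \<Rightarrow> 'b melem \<Rightarrow> 'b melem \<Rightarrow> ('b melem \<times> 'b melem) set" where
  "frac_class r n P a f = {(a', f'). f' \<in> Acar r \<and> f' \<notin> P \<and>
      (\<exists>d::nat. hdeg r (int d) f' \<and> hdeg r (int d + n) a') \<and>
      (\<exists>u\<in>Acar r. u \<notin> P \<and> amul u (amul a f') = amul u (amul a' f))}"

text \<open>Sections of O_X(n) = ~A(n) over an open U (Hartshorne-style definition of ~M):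
  functions assigning to each P in U an element of the stalk, locally given by one fraction.\<close>
definition sections :: "nat \<Rightarrow> int \<Rightarrow> ('b::{comm_monoid_mult,mult_zero}) melem set set
     \<Rightarrow> ('b melem set \<Rightarrow> ('b melem \<times> 'b melem) set) set" where
  "sections r n U = {s. (\<forall>P. P \<notin> U \<longrightarrow> s P = {}) \<and>
     (\<forall>P\<in>U. \<exists>V a f d. is_open r V \<and> P \<in> V \<and> V \<subseteq> U \<and>
        hdeg r (int d) f \<and> hdeg r (int d + n) a \<and>
        (\<forall>Q\<in>V. f \<notin> Q \<and> s Q = frac_class r n Q a f))}"

definition Gamma :: "nat \<Rightarrow> int
     \<Rightarrow> (('b::{comm_monoid_mult,mult_zero}) melem set \<Rightarrow> ('b melem \<times> 'b melem) set) set" where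
  "Gamma r n = sections r n (MProj r)"

definition gmap :: "nat \<Rightarrow> int \<Rightarrow> ('b::{comm_monoid_mult,mult_zero}) melem
     \<Rightarrow> ('b melem set \<Rightarrow> ('b melem \<times> 'b melem) set)" where
  "gmap r n a = (\<lambda>P. if P \<in> MProj r then frac_class r n P a aone else {})"

text \<open>Action of a \<in> A_i: Gamma(X,O_X(k)) \<rightarrow> Gamma(X,O_X(k+i)), s \<mapsto> a s; n is the target degree.\<close>
definition sact :: "nat \<Rightarrow> int \<Rightarrow> ('b::{comm_monoid_mult,mult_zero}) melem
     \<Rightarrow> ('b melem set \<Rightarrow> ('b melem \<times> 'b melem) set)
     \<Rightarrow> ('b melem set \<Rightarrow> ('b melem \<times> 'b melem) set)" where
  "sact r n a s = (\<lambda>P. if P \<in> MProj r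
       then \<Union>{frac_class r n P (amul a x) t | x t. (x, t) \<in> s P} else {})"

end

theory Submission
  imports Defs
begin

text \<open>
  Sections are probed at the primes \<open>P_J\<close> (\<open>\<emptyset> \<noteq> J \<subseteq> {0..r}\<close>) consisting of the elements
  \<open>c x^\<alpha>\<close> with \<open>c\<close> a non-unit or \<open>x^\<alpha>\<close> involving a variable outside \<open>J\<close>; outside \<open>P_J\<close>
  every element has a unit coefficient, so fractions at \<open>P_J\<close> can be cancelled.
  \<open>P_{i}\<close> is the generic point of \<open>D_+(x_i)\<close>: every prime not containing \<open>x_i\<close> lies in
  \<open>P_{i}\<close>, so an open set containing \<open>P_{i}\<close> contains \<open>D_+(x_i)\<close>, and a global section is a
  single fraction \<open>a_i/f_i\<close> on \<open>D_+(x_i)\<close>, with \<open>f_i\<close> a unit times a power of \<open>x_i\<close>.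
  Comparing \<open>a_i/f_i\<close> with \<open>a_j/f_j\<close> for some \<open>j \<noteq> i\<close> (here \<open>r \<ge> 1\<close> is needed) at
  \<open>P_{i,j}\<close> shows that \<open>f_i\<close> divides \<open>a_i\<close>, and comparing the quotients at \<open>P_{0,i}\<close>
  shows that they all coincide.
\<close>

lemma amul_commute: "amul x y = amul y x"
  unfolding amul_def by (auto simp: mult.commute add.commute)

lemma amul_assoc: "amul (amul x y) z = amul x (amul y z)"
proof -
  have "a * b = 0 \<Longrightarrow> a * (b * c) = 0" "b * c = 0 \<Longrightarrow> (a * b) * c = 0"
    for a b c :: "'a::{comm_monoid_mult,mult_zero}"
    by (metis mult.assoc mult_zero_left, metis mult.assoc mult_zero_right)
  then show ?thesis unfolding amul_def azero_def by (auto simp: add.assoc mult.assoc)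
qed

lemma amul_left_commute: "amul x (amul y z) = amul y (amul x z)"
  by (metis amul_assoc amul_commute)

lemmas amul_ac = amul_assoc amul_commute amul_left_commute

lemma Acar_eq_azero: "x \<in> Acar r \<Longrightarrow> fst x = 0 \<Longrightarrow> x = azero"
  unfolding Acar_def azero_def by (cases x) auto

lemma azero_in_Acar: "azero \<in> Acar r"
  unfolding Acar_def azero_def by auto

lemma aone_in_Acar: "aone \<in> Acar r"
  unfolding Acar_def aone_def by auto

lemma amul_in_Acar: "x \<in> Acar r \<Longrightarrow> y \<in> Acar r \<Longrightarrow> amul x y \<in> Acar r"
  unfolding amul_def Acar_def azero_def by (cases x; cases y) auto

lemma amul_aone_left: "x \<in> Acar r \<Longrightarrow> amul aone x = x"
  unfolding amul_def aone_def using Acar_eq_azero[of x r] by (cases x) (auto simp: azero_def)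

lemma amul_aone_right: "x \<in> Acar r \<Longrightarrow> amul x aone = x"
  using amul_aone_left amul_commute by metis

lemma amul_azero_left: "amul azero x = azero"
  unfolding amul_def azero_def by auto

lemma hdeg_in_Acar: "hdeg r d a \<Longrightarrow> a \<in> Acar r"
  unfolding hdeg_def by auto

lemma hdeg_azero: "hdeg r d azero"
  unfolding hdeg_def using azero_in_Acar by (simp add: azero_def)

lemma hdeg_aone: "hdeg r (int 0) aone"
  unfolding hdeg_def using aone_in_Acar by (simp add: aone_def)

lemma hdeg_degree: "hdeg r d a \<Longrightarrow> fst a \<noteq> 0 \<Longrightarrow> int (sum (snd a) {0..r}) = d"
  unfolding hdeg_def by auto

lemma unit_mult_left_cancel:
  fixes c :: "'b::comm_monoid_mult"
  assumes "c dvd 1"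
  shows "c * a = c * b \<longleftrightarrow> a = b"
proof
  obtain v where v: "1 = c * v" using assms by (rule dvdE)
  have inverse: "x = v * (c * x)" for x
  proof -
    have "v * (c * x) = (c * v) * x" by (simp add: ac_simps)
    then show ?thesis using v by simp
  qed
  assume "c * a = c * b"
  then show "a = b" using inverse[of a] inverse[of b] by simp
qed simp

lemma unit_mult_eq_zero_iff:
  "(c::'b::{comm_monoid_mult,mult_zero}) dvd 1 \<Longrightarrow> c * b = 0 \<longleftrightarrow> b = 0"
  using unit_mult_left_cancel[of c b 0] by simp

lemma unit_mult_iff: "(a * b) dvd 1 \<longleftrightarrow> a dvd 1 \<and> (b::'b::comm_monoid_mult) dvd 1"
proof
  assume "a * b dvd 1"
  then show "a dvd 1 \<and> b dvd 1" using dvd_mult_left dvd_mult_right by blast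
next
  assume "a dvd 1 \<and> b dvd 1"
  then have "a * b dvd 1 * 1" using mult_dvd_mono by blast
  then show "a * b dvd 1" by simp
qed

lemma unit_neq_zero: "(0::'b::{comm_monoid_mult,mult_zero}) \<noteq> 1 \<Longrightarrow> (c::'b) dvd 1 \<Longrightarrow> c \<noteq> 0"
  using unit_mult_eq_zero_iff[of c 1] by auto

lemma amul_cancel_unit:
  assumes u: "fst u dvd 1" and "x \<in> Acar r" "y \<in> Acar r" and eq: "amul u x = amul u y"
  shows "x = y"
proof (cases "fst x = 0")
  case True
  then have "amul u y = azero" using eq by (simp add: amul_def)
  then have "fst y = 0" using unit_mult_eq_zero_iff[OF u]
    by (auto simp: amul_def azero_def split: if_splits)
  then show ?thesis using True Acar_eq_azero assms(2,3) by metis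
next
  case False
  then have "fst u * fst y \<noteq> 0" using eq unit_mult_eq_zero_iff[OF u]
    by (auto simp: amul_def azero_def split: if_splits)
  then have "fst u * fst x = fst u * fst y" "(\<lambda>i. snd u i + snd x i) = (\<lambda>i. snd u i + snd y i)"
    using eq False unit_mult_eq_zero_iff[OF u] by (auto simp: amul_def split: if_splits)
  then show ?thesis using unit_mult_left_cancel[OF u] by (auto simp: fun_eq_iff prod_eq_iff)
qed

lemma is_prime_amul_notin:
  "is_prime r P \<Longrightarrow> a \<in> Acar r \<Longrightarrow> b \<in> Acar r \<Longrightarrow> a \<notin> P \<Longrightarrow> b \<notin> P \<Longrightarrow> amul a b \<notin> P"
  unfolding is_prime_def by blast

lemma is_prime_amul_in: "is_prime r P \<Longrightarrow> a \<in> Acar r \<Longrightarrow> p \<in> P \<Longrightarrow> amul a p \<in> P"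
  unfolding is_prime_def is_ideal_def by blast

lemma is_prime_subset_Acar: "is_prime r P \<Longrightarrow> P \<subseteq> Acar r"
  unfolding is_prime_def is_ideal_def by blast

lemma is_prime_aone_notin: "is_prime r P \<Longrightarrow> aone \<notin> P"
  unfolding is_prime_def by auto

lemma is_prime_azero_in: "is_prime r P \<Longrightarrow> azero \<in> P"
  unfolding is_prime_def is_ideal_def by auto

lemma MProj_is_prime: "P \<in> MProj r \<Longrightarrow> is_prime r P"
  unfolding MProj_def by auto

lemma is_open_downward_closed: "is_open r V \<Longrightarrow> P \<in> V \<Longrightarrow> Q \<in> MProj r \<Longrightarrow> Q \<subseteq> P \<Longrightarrow> Q \<in> V"
  unfolding is_open_def by blast

lemma is_open_MProj: "is_open r (MProj r)"
  unfolding is_open_def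
  by (rule exI[of _ "{aone}"]) (auto simp: aone_in_Acar MProj_def is_prime_aone_notin)

lemma frac_class_subset:
  assumes P: "is_prime r P" and A: "a \<in> Acar r" "f \<in> Acar r" "a2 \<in> Acar r" "f2 \<in> Acar r"
    and f: "f \<notin> P" and u: "u \<in> Acar r" "u \<notin> P"
    and eq: "amul u (amul a f2) = amul u (amul a2 f)"
  shows "frac_class r n P a f \<subseteq> frac_class r n P a2 f2"
proof
  fix z assume z_in: "z \<in> frac_class r n P a f"
  obtain a' f' where z: "z = (a', f')" by (cases z)
  have f': "f' \<in> Acar r" "f' \<notin> P"
    and deg: "\<exists>d::nat. hdeg r (int d) f' \<and> hdeg r (int d + n) a'"
    and "\<exists>v\<in>Acar r. v \<notin> P \<and> amul v (amul a f') = amul v (amul a' f)"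
    using z_in unfolding z frac_class_def by auto
  then obtain v where v: "v \<in> Acar r" "v \<notin> P" "amul v (amul a f') = amul v (amul a' f)"
    by blast
  define w where "w = amul u (amul v f)"
  have w: "w \<in> Acar r" "w \<notin> P"
    unfolding w_def using u v A f P by (simp_all add: amul_in_Acar is_prime_amul_notin)
  have "amul w (amul a2 f') = amul (amul v f') (amul u (amul a2 f))"
    unfolding w_def by (simp add: amul_ac)
  also have "\<dots> = amul (amul v f') (amul u (amul a f2))" using eq by simp
  also have "\<dots> = amul (amul u f2) (amul v (amul a f'))" by (simp add: amul_ac)
  also have "\<dots> = amul (amul u f2) (amul v (amul a' f))" using v(3) by simp
  also have "\<dots> = amul w (amul a' f2)" unfolding w_def by (simp add: amul_ac)
  finally show "z \<in> frac_class r n P a2 f2"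
    unfolding frac_class_def z using f' deg w by blast
qed

lemma frac_class_eq:
  assumes "is_prime r P" "a \<in> Acar r" "f \<in> Acar r" "a2 \<in> Acar r" "f2 \<in> Acar r"
    and "f \<notin> P" "f2 \<notin> P" "u \<in> Acar r" "u \<notin> P"
    and "amul u (amul a f2) = amul u (amul a2 f)"
  shows "frac_class r n P a f = frac_class r n P a2 f2"
  using frac_class_subset[of r P a f a2 f2 u n] frac_class_subset[of r P a2 f2 a f u n] assms
  by (metis subset_antisym)

lemma frac_class_self:
  "f \<in> Acar r \<Longrightarrow> f \<notin> P \<Longrightarrow> hdeg r (int d) f \<Longrightarrow> hdeg r (int d + n) a
    \<Longrightarrow> (a, f) \<in> frac_class r n P a f"
  unfolding frac_class_def using aone_in_Acar by blast

lemma frac_class_memD: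
  "(a', f') \<in> frac_class r n P a f \<Longrightarrow> \<exists>v\<in>Acar r. v \<notin> P \<and> amul v (amul a f') = amul v (amul a' f)"
  unfolding frac_class_def by auto

lemma frac_class_amul_denominator:
  assumes "is_prime r P" "a \<in> Acar r" "f \<in> Acar r" "f \<notin> P"
  shows "frac_class r n P (amul a f) f = frac_class r n P a aone"
proof (rule frac_class_eq[where u = aone])
  have "amul a f \<in> Acar r" using assms by (simp add: amul_in_Acar)
  then show "amul aone (amul (amul a f) aone) = amul aone (amul a f)"
    by (simp add: amul_aone_left amul_aone_right)
qed (use assms in \<open>simp_all add: amul_in_Acar aone_in_Acar is_prime_aone_notin\<close>)

subsection \<open>The points \<open>P_J\<close>\<close>

definition coord_prime :: "nat \<Rightarrow> nat set \<Rightarrow> ('b::{comm_monoid_mult,mult_zero}) melem set" where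
  "coord_prime r J = {a \<in> Acar r. \<not> fst a dvd 1 \<or> (\<exists>k. k \<notin> J \<and> snd a k > 0)}"

definition xpow :: "nat \<Rightarrow> nat \<Rightarrow> ('b::{comm_monoid_mult,mult_zero}) melem" where
  "xpow i k = (1, \<lambda>j. if j = i then k else 0)"

lemma notin_coord_primeD:
  assumes "a \<in> Acar r" "a \<notin> coord_prime r J"
  shows "fst a dvd 1" "k \<notin> J \<Longrightarrow> snd a k = 0"
  using assms unfolding coord_prime_def by auto

lemma coord_prime_antimono: "J \<subseteq> J' \<Longrightarrow> coord_prime r J' \<subseteq> coord_prime r J"
  unfolding coord_prime_def by auto

lemma is_prime_coord_prime:
  assumes nz: "(0::'b::{comm_monoid_mult,mult_zero}) \<noteq> 1"
  shows "is_prime r (coord_prime r J :: 'b melem set)"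
proof -
  have zero_in: "azero \<in> (coord_prime r J :: 'b melem set)"
    using azero_in_Acar[of r] unit_neq_zero[OF nz, of 0] by (auto simp: coord_prime_def azero_def)
  have notin_iff: "a \<notin> coord_prime r J \<and> b \<notin> coord_prime r J \<longleftrightarrow> amul a b \<notin> coord_prime r J"
    if "a \<in> Acar r" "b \<in> Acar r" for a b :: "'b melem"
  proof (cases "fst a * fst b = 0")
    case True
    then have "\<not> (fst a dvd 1 \<and> fst b dvd 1)"
      using unit_mult_iff[of "fst a" "fst b"] unit_neq_zero[OF nz, of "fst a * fst b"] by blast
    then have "\<not> (a \<notin> coord_prime r J \<and> b \<notin> coord_prime r J)"
      using notin_coord_primeD(1) that by blast
    moreover have "amul a b = azero" using True by (simp add: amul_def)
    ultimately show ?thesis using zero_in by simp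
  next
    case False
    then show ?thesis using that amul_in_Acar[OF that]
      by (auto simp: coord_prime_def amul_def unit_mult_iff)
  qed
  have "coord_prime r J \<subseteq> (Acar r :: 'b melem set)" by (auto simp: coord_prime_def)
  moreover have "aone \<notin> (coord_prime r J :: 'b melem set)"
    by (simp add: coord_prime_def aone_def)
  ultimately show ?thesis
    unfolding is_prime_def is_ideal_def using zero_in notin_iff amul_in_Acar by blast
qed

lemma frac_class_aone_inj_coord_prime:
  assumes nz: "(0::'b::{comm_monoid_mult,mult_zero}) \<noteq> 1"
    and a: "hdeg r k (a :: 'b melem)" and b: "hdeg r k b"
    and eq: "frac_class r k (coord_prime r J) a aone = frac_class r k (coord_prime r J) b aone"
  shows "a = b"
proof -
  have P: "is_prime r (coord_prime r J :: 'b melem set)" by (rule is_prime_coord_prime[OF nz])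
  have A: "a \<in> Acar r" "b \<in> Acar r" using a b hdeg_in_Acar by blast+
  have "(b, aone) \<in> frac_class r k (coord_prime r J) a aone"
    using frac_class_self[OF aone_in_Acar is_prime_aone_notin[OF P] hdeg_aone] b eq by simp
  then obtain v where v: "v \<in> Acar r" "v \<notin> coord_prime r J" "amul v (amul a aone) = amul v (amul b aone)"
    using frac_class_memD by blast
  then have "amul v a = amul v b" using A by (simp add: amul_aone_right)
  then show ?thesis by (rule amul_cancel_unit[OF notin_coord_primeD(1)[OF v(1,2)] A])
qed

lemma xpow_in_Acar: "(0::'b::{comm_monoid_mult,mult_zero}) \<noteq> 1 \<Longrightarrow> i \<le> r \<Longrightarrow> (xpow i k :: 'b melem) \<in> Acar r"
  unfolding xpow_def Acar_def by auto

lemma hdeg_xpow: "(0::'b::{comm_monoid_mult,mult_zero}) \<noteq> 1 \<Longrightarrow> i \<le> r \<Longrightarrow> hdeg r 1 (xpow i 1 :: 'b melem)"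
  unfolding hdeg_def using xpow_in_Acar[of i r 1] by (simp add: xpow_def)

lemma xpow_notin_coord_prime: "i \<in> J \<Longrightarrow> xpow i k \<notin> coord_prime r J"
  unfolding coord_prime_def xpow_def by auto

lemma coord_prime_in_MProj:
  assumes nz: "(0::'b::{comm_monoid_mult,mult_zero}) \<noteq> 1" and "i \<in> J" "i \<le> r"
  shows "(coord_prime r J :: 'b melem set) \<in> MProj r"
proof -
  have "xpow i 1 \<in> (Apos r :: 'b melem set)" unfolding Apos_def using hdeg_xpow[OF nz assms(3)] by force
  then show ?thesis unfolding MProj_def using is_prime_coord_prime[OF nz] xpow_notin_coord_prime[OF assms(2)] by blast
qed

lemma xpow_notin_prime:
  assumes nz: "(0::'b::{comm_monoid_mult,mult_zero}) \<noteq> 1" and P: "is_prime r P" and i: "i \<le> r"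
    and x: "(xpow i 1 :: 'b melem) \<notin> P"
  shows "(xpow i k :: 'b melem) \<notin> P"
proof (induction k)
  case 0
  have "(xpow i 0 :: 'b melem) = aone" unfolding xpow_def aone_def by auto
  then show ?case using is_prime_aone_notin[OF P] by simp
next
  case (Suc k)
  have "(xpow i (Suc k) :: 'b melem) = amul (xpow i 1) (xpow i k)"
    using nz unfolding xpow_def amul_def by (auto simp: fun_eq_iff)
  then show ?case using Suc is_prime_amul_notin[OF P xpow_in_Acar[OF nz i] xpow_in_Acar[OF nz i] x] by metis
qed

lemma prime_subset_coord_prime:
  assumes nz: "(0::'b::{comm_monoid_mult,mult_zero}) \<noteq> 1" and P: "is_prime r P" and i: "i \<le> r"
    and x: "(xpow i 1 :: 'b melem) \<notin> P"
  shows "P \<subseteq> coord_prime r {i}"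
proof
  fix q assume q: "q \<in> P"
  show "q \<in> coord_prime r {i}"
  proof (rule ccontr)
    assume q': "q \<notin> coord_prime r {i}"
    have qA: "q \<in> Acar r" using q is_prime_subset_Acar[OF P] by blast
    have supp: "\<forall>k. k \<noteq> i \<longrightarrow> snd q k = 0" using notin_coord_primeD(2)[OF qA q'] by simp
    obtain c where "1 = fst q * c" using notin_coord_primeD(1)[OF qA q'] by (rule dvdE)
    then have c: "c * fst q = 1" by (simp add: mult.commute)
    have cA: "(c, \<lambda>_. 0) \<in> Acar r" unfolding Acar_def by auto
    have "amul (c, \<lambda>_. 0) q = xpow i (snd q i)"
      using c nz supp unfolding amul_def xpow_def by (auto simp: fun_eq_iff)
    then show False using is_prime_amul_in[OF P cA q] xpow_notin_prime[OF nz P i x] by simp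
  qed
qed

lemma MProj_cover:
  assumes "Q \<in> MProj r"
  obtains i where "i \<le> r" "(xpow i 1 :: 'b::{comm_monoid_mult,mult_zero} melem) \<notin> Q"
proof -
  have P: "is_prime r Q" using assms by (rule MProj_is_prime)
  obtain a d where a: "a \<notin> Q" "d \<ge> 1" "hdeg r d a" using assms unfolding MProj_def Apos_def by auto
  have aA: "a \<in> Acar r" using a hdeg_in_Acar by blast
  have fz: "fst a \<noteq> 0" using a(1) aA Acar_eq_azero is_prime_azero_in[OF P] by metis
  then have "sum (snd a) {0..r} \<noteq> 0" using hdeg_degree[OF a(3)] a(2) by linarith
  then obtain i where i: "i \<le> r" "snd a i > 0" by (metis atLeastAtMost_iff gr0I sum.neutral)
  define b where "b = (fst a, \<lambda>j. if j = i then snd a j - 1 else snd a j)"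
  have "b \<in> Acar r" using aA fz i unfolding b_def Acar_def by auto
  moreover have "amul b (xpow i 1) = a"
    using fz i unfolding b_def amul_def xpow_def by (auto simp: fun_eq_iff prod_eq_iff)
  ultimately have "xpow i 1 \<notin> Q" using a(1) is_prime_amul_in[OF P] by metis
  then show thesis using i that by blast
qed

lemma homogeneous_notin_coord_prime:
  assumes nz: "(0::'b::{comm_monoid_mult,mult_zero}) \<noteq> 1" and i: "i \<le> r"
    and f: "hdeg r (int d) (f :: 'b melem)" "f \<notin> coord_prime r {i}"
  shows "fst f dvd 1" "\<forall>k. k \<noteq> i \<longrightarrow> snd f k = 0" "snd f i = d"
proof -
  show u: "fst f dvd 1" and supp: "\<forall>k. k \<noteq> i \<longrightarrow> snd f k = 0"
    using notin_coord_primeD[OF hdeg_in_Acar[OF f(1)] f(2)] by auto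
  have "sum (snd f) {0..r} = sum (snd f) {i}"
    using i supp by (intro sum.mono_neutral_right) auto
  then show "snd f i = d" using hdeg_degree[OF f(1) unit_neq_zero[OF nz u]] by simp
qed

subsection \<open>Global sections\<close>

type_synonym 'b section_fun = "'b melem set \<Rightarrow> ('b melem \<times> 'b melem) set"

lemma section_on_basic_open:
  fixes s :: "'b::{comm_monoid_mult,mult_zero} section_fun"
  assumes nz: "(0::'b) \<noteq> 1" and s: "s \<in> Gamma r k" and i: "i \<le> r"
  obtains d f a where "hdeg r (int d) f" "hdeg r (int d + k) (a :: 'b melem)" "f \<notin> coord_prime r {i}"
    "\<forall>Q\<in>MProj r. (xpow i 1 :: 'b melem) \<notin> Q \<longrightarrow> f \<notin> Q \<and> s Q = frac_class r k Q a f"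
proof -
  have "(coord_prime r {i} :: 'b melem set) \<in> MProj r" using coord_prime_in_MProj[OF nz _ i] by simp
  then obtain V a f d where V: "is_open r V" "coord_prime r {i} \<in> V"
    "hdeg r (int d) f" "hdeg r (int d + k) (a :: 'b melem)"
    "\<forall>Q\<in>V. f \<notin> Q \<and> s Q = frac_class r k Q a f"
    using s unfolding Gamma_def sections_def by blast
  have "Q \<in> V" if "Q \<in> MProj r" "xpow i 1 \<notin> Q" for Q :: "'b melem set"
    using is_open_downward_closed[OF V(1,2) that(1)] prime_subset_coord_prime[OF nz _ i that(2)]
      MProj_is_prime[OF that(1)] by blast
  with V show thesis by (intro that) auto
qed

lemma quotient_by_coord_unit:
  assumes nz: "(0::'b::{comm_monoid_mult,mult_zero}) \<noteq> 1" and i: "i \<le> r"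
    and f: "hdeg r (int d) (f :: 'b melem)" "f \<notin> coord_prime r {i}"
    and a: "hdeg r (int d + k) a" "fst a \<noteq> 0" "snd a i \<ge> d"
  obtains q where "hdeg r k q" "a = amul q f"
proof -
  note f_mon = homogeneous_notin_coord_prime[OF nz i f]
  obtain c where c: "1 = fst f * c" using f_mon(1) by (rule dvdE)
  define q where "q = (fst a * c, \<lambda>m. if m = i then snd a m - d else snd a m)"
  have "fst q * fst f = fst a * (fst f * c)" unfolding q_def by (simp add: ac_simps)
  then have fq: "fst q * fst f = fst a" using c by simp
  then have "fst q \<noteq> 0" using a(2) by auto
  then have qA: "q \<in> Acar r" using hdeg_in_Acar[OF a(1)] i unfolding Acar_def q_def by auto
  have "amul q f = a"
    using fq a(2,3) f_mon unfolding amul_def q_def by (auto simp: prod_eq_iff fun_eq_iff)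
  moreover have "snd a = (\<lambda>m. snd q m + (if m = i then d else 0))"
    using a(3) unfolding q_def by (auto simp: fun_eq_iff)
  then have "sum (snd a) {0..r} = sum (snd q) {0..r} + d"
    using i by (simp add: sum.distrib)
  then have "hdeg r k q" using hdeg_degree[OF a(1,2)] qA by (simp add: hdeg_def)
  ultimately show thesis using that by simp
qed

lemma denominator_divides_numerator:
  assumes nz: "(0::'b::{comm_monoid_mult,mult_zero}) \<noteq> 1" and ij: "i \<noteq> j" "i \<le> r" "j \<le> r"
    and fi: "hdeg r (int di) (fi :: 'b melem)" "fi \<notin> coord_prime r {i}" and ai: "hdeg r (int di + k) ai"
    and fj: "hdeg r (int dj) (fj :: 'b melem)" "fj \<notin> coord_prime r {j}" and aj: "hdeg r (int dj + k) aj"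
    and eq: "frac_class r k (coord_prime r {i,j}) ai fi = frac_class r k (coord_prime r {i,j}) aj fj"
  obtains a where "hdeg r k a" "ai = amul a fi"
proof (cases "fst ai = 0")
  case True
  then show thesis using that Acar_eq_azero[OF hdeg_in_Acar[OF ai]] amul_azero_left hdeg_azero by metis
next
  case False
  have A: "fi \<in> Acar r" "ai \<in> Acar r" "fj \<in> Acar r" "aj \<in> Acar r"
    using fi ai fj aj hdeg_in_Acar by blast+
  have "fj \<notin> coord_prime r {i,j}" using fj coord_prime_antimono[of "{j}" "{i,j}" r] by blast
  then have "(aj, fj) \<in> frac_class r k (coord_prime r {i,j}) ai fi"
    using frac_class_self[OF A(3) _ fj(1) aj] eq by simp
  then obtain v where v: "v \<in> Acar r" "v \<notin> coord_prime r {i,j}" "amul v (amul ai fj) = amul v (amul aj fi)"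
    using frac_class_memD by blast
  have cross: "amul ai fj = amul aj fi"
    using amul_cancel_unit[OF _ amul_in_Acar[OF A(2,3)] amul_in_Acar[OF A(4,1)] v(3)]
      notin_coord_primeD(1)[OF v(1,2)] by blast
  note fi_mon = homogeneous_notin_coord_prime[OF nz ij(2) fi]
  note fj_mon = homogeneous_notin_coord_prime[OF nz ij(3) fj]
  have "fst ai * fst fj \<noteq> 0"
    using False unit_mult_eq_zero_iff[OF fj_mon(1)] by (simp add: mult.commute)
  with cross have "snd ai i + snd fj i = snd aj i + snd fi i"
    by (auto simp: amul_def azero_def split: if_splits dest: fun_cong[where x = i])
  then have "snd ai i \<ge> di" using fi_mon fj_mon ij(1) by auto
  with False show thesis using quotient_by_coord_unit[OF nz ij(2) fi ai] that by blast
qed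

lemma section_on_basic_open_eq_frac_aone:
  fixes s :: "'b::{comm_monoid_mult,mult_zero} section_fun"
  assumes nz: "(0::'b) \<noteq> 1" and r: "r \<ge> 1"
    and s: "s \<in> Gamma r k" and i: "i \<le> r"
  obtains a where "hdeg r k (a :: 'b melem)"
    "\<forall>Q\<in>MProj r. (xpow i 1 :: 'b melem) \<notin> Q \<longrightarrow> s Q = frac_class r k Q a aone"
proof -
  define j where "j = (if i = 0 then 1 else (0::nat))"
  have j: "j \<le> r" "i \<noteq> j" using r by (simp_all add: j_def)
  obtain ai fi di where I: "hdeg r (int di) fi" "hdeg r (int di + k) (ai :: 'b melem)" "fi \<notin> coord_prime r {i}"
     "\<forall>Q\<in>MProj r. (xpow i 1 :: 'b melem) \<notin> Q \<longrightarrow> fi \<notin> Q \<and> s Q = frac_class r k Q ai fi"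
    by (rule section_on_basic_open[OF nz s i])
  obtain aj fj dj where J: "hdeg r (int dj) fj" "hdeg r (int dj + k) (aj :: 'b melem)" "fj \<notin> coord_prime r {j}"
     "\<forall>Q\<in>MProj r. (xpow j 1 :: 'b melem) \<notin> Q \<longrightarrow> fj \<notin> Q \<and> s Q = frac_class r k Q aj fj"
    by (rule section_on_basic_open[OF nz s j(1)])
  have Pij: "(coord_prime r {i,j} :: 'b melem set) \<in> MProj r" using coord_prime_in_MProj[OF nz _ i] by simp
  have "s (coord_prime r {i,j}) = frac_class r k (coord_prime r {i,j}) ai fi"
    using I(4) Pij xpow_notin_coord_prime[of i "{i,j}"] by blast
  moreover have "s (coord_prime r {i,j}) = frac_class r k (coord_prime r {i,j}) aj fj"
    using J(4) Pij xpow_notin_coord_prime[of j "{i,j}"] by blast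
  ultimately have "frac_class r k (coord_prime r {i,j}) ai fi = frac_class r k (coord_prime r {i,j}) aj fj"
    by simp
  then obtain a where a: "hdeg r k a" "ai = amul a fi"
    using denominator_divides_numerator[OF nz j(2) i j(1) I(1,3,2) J(1,3,2)] by blast
  have "s Q = frac_class r k Q a aone" if "Q \<in> MProj r" "xpow i 1 \<notin> Q" for Q
  proof -
    have fi: "fi \<notin> Q" and "s Q = frac_class r k Q ai fi" using I(4) that by blast+
    then have "s Q = frac_class r k Q (amul a fi) fi" using a(2) by simp
    also have "\<dots> = frac_class r k Q a aone"
      using frac_class_amul_denominator[OF MProj_is_prime[OF that(1)] hdeg_in_Acar[OF a(1)]
          hdeg_in_Acar[OF I(1)] fi] .
    finally show ?thesis .
  qed
  with a(1) show thesis using that by blast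
qed

lemma gmap_in_Gamma:
  assumes "hdeg r k (a :: 'b::{comm_monoid_mult,mult_zero} melem)"
  shows "gmap r k a \<in> Gamma r k"
proof -
  have global: "aone \<notin> Q \<and> gmap r k a Q = frac_class r k Q a aone" if "Q \<in> MProj r" for Q
    using is_prime_aone_notin[OF MProj_is_prime[OF that]] that by (simp add: gmap_def)
  have "\<exists>V a' f d. is_open r V \<and> P \<in> V \<and> V \<subseteq> MProj r \<and> hdeg r (int d) f \<and>
      hdeg r (int d + k) a' \<and> (\<forall>Q\<in>V. f \<notin> Q \<and> gmap r k a Q = frac_class r k Q a' f)"
    if "P \<in> MProj r" for P :: "'b melem set"
    by (rule exI[of _ "MProj r"], rule exI[of _ a], rule exI[of _ aone], rule exI[of _ "0::nat"])
      (use that assms global in \<open>simp add: is_open_MProj hdeg_aone[simplified]\<close>)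
  then show ?thesis unfolding Gamma_def sections_def by (auto simp: gmap_def)
qed

lemma MProj_trivial:
  assumes "(0::'b::{comm_monoid_mult,mult_zero}) = 1"
  shows "MProj r = ({} :: 'b melem set set)"
proof -
  have e: "aone = (azero :: 'b melem)" using assms by (simp add: aone_def azero_def)
  have "P \<notin> MProj r" for P :: "'b melem set"
  proof
    assume "P \<in> MProj r"
    then have "aone \<notin> P" "azero \<in> P"
      using is_prime_aone_notin is_prime_azero_in MProj_is_prime by blast+
    then show False using e by simp
  qed
  then show ?thesis by blast
qed

lemma gmap_inj_on:
  "inj_on (gmap r k) {a :: 'b::{comm_monoid_mult,mult_zero} melem. hdeg r k a}"
proof (cases "(0::'b) = 1")
  case True
  have "b = 0" for b :: 'b
  proof -
    have "b = b * 1" by simp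
    also have "\<dots> = b * 0" using True by simp
    finally show ?thesis by simp
  qed
  then have trivial: "a = azero" if "hdeg r k a" for a :: "'b melem"
    using Acar_eq_azero[OF hdeg_in_Acar[OF that]] by blast
  show ?thesis
  proof (rule inj_onI)
    fix a b :: "'b melem" assume "a \<in> {a. hdeg r k a}" "b \<in> {a. hdeg r k a}"
    then show "a = b" using trivial[of a] trivial[of b] by simp
  qed
next
  case False
  have P: "(coord_prime r {0} :: 'b melem set) \<in> MProj r" using coord_prime_in_MProj[OF False _ le0] by simp
  show ?thesis
  proof (rule inj_onI)
    fix a b :: "'b melem"
    assume "a \<in> {a. hdeg r k a}" "b \<in> {a. hdeg r k a}" and e: "gmap r k a = gmap r k b"
    then have "hdeg r k a" "hdeg r k b" by simp_all
    moreover have "frac_class r k (coord_prime r {0}) a aone = frac_class r k (coord_prime r {0}) b aone"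
      using fun_cong[OF e, of "coord_prime r {0}"] P by (simp add: gmap_def)
    ultimately show "a = b" by (rule frac_class_aone_inj_coord_prime[OF False])
  qed
qed

lemma Gamma_subset_gmap_image:
  assumes r: "r \<ge> 1"
  shows "Gamma r k \<subseteq> gmap r k ` {a :: 'b::{comm_monoid_mult,mult_zero} melem. hdeg r k a}"
proof
  fix s :: "'b section_fun" assume s: "s \<in> Gamma r k"
  have off: "s P = {}" if "P \<notin> MProj r" for P
    using s that by (simp add: Gamma_def sections_def)
  show "s \<in> gmap r k ` {a. hdeg r k a}"
  proof (cases "(0::'b) = 1")
    case True
    then have "MProj r = ({} :: 'b melem set set)" by (rule MProj_trivial)
    then have "s = gmap r k azero" by (simp add: gmap_def fun_eq_iff off)
    then show ?thesis using hdeg_azero by blast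
  next
    case nz: False
    have "\<forall>i\<in>{..r}. \<exists>a. hdeg r k a \<and> (\<forall>Q\<in>MProj r. xpow i 1 \<notin> Q \<longrightarrow> s Q = frac_class r k Q a aone)"
    proof
      fix i assume "i \<in> {..r}"
      then have i: "i \<le> r" by simp
      obtain a where "hdeg r k (a :: 'b melem)"
        "\<forall>Q\<in>MProj r. (xpow i 1 :: 'b melem) \<notin> Q \<longrightarrow> s Q = frac_class r k Q a aone"
        by (rule section_on_basic_open_eq_frac_aone[OF nz r s i])
      then show "\<exists>a. hdeg r k a \<and> (\<forall>Q\<in>MProj r. xpow i 1 \<notin> Q \<longrightarrow> s Q = frac_class r k Q a aone)"
        by blast
    qed
    then have "\<exists>A. \<forall>i\<in>{..r}. hdeg r k (A i) \<and>
        (\<forall>Q\<in>MProj r. xpow i 1 \<notin> Q \<longrightarrow> s Q = frac_class r k Q (A i) aone)"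
      by (rule bchoice)
    then obtain A where A: "\<forall>i\<in>{..r}. hdeg r k (A i) \<and>
        (\<forall>Q\<in>MProj r. xpow i 1 \<notin> Q \<longrightarrow> s Q = frac_class r k Q (A i) aone)" ..
    have A_hdeg: "hdeg r k (A i)" if "i \<le> r" for i using A that by simp
    have A_sec: "s Q = frac_class r k Q (A i) aone" if "i \<le> r" "Q \<in> MProj r" "xpow i 1 \<notin> Q" for i Q
      using A that by simp
    have same: "A i = A 0" if i: "i \<le> r" for i
    proof -
      have P: "(coord_prime r {0,i} :: 'b melem set) \<in> MProj r" using coord_prime_in_MProj[OF nz _ le0] by simp
      have "s (coord_prime r {0,i}) = frac_class r k (coord_prime r {0,i}) (A i) aone"
        using A_sec[OF i P xpow_notin_coord_prime] by simp
      moreover have "s (coord_prime r {0,i}) = frac_class r k (coord_prime r {0,i}) (A 0) aone"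
        using A_sec[OF le0 P xpow_notin_coord_prime] by simp
      ultimately have "frac_class r k (coord_prime r {0,i}) (A i) aone =
          frac_class r k (coord_prime r {0,i}) (A 0) aone" by simp
      then show ?thesis by (rule frac_class_aone_inj_coord_prime[OF nz A_hdeg[OF i] A_hdeg[OF le0]])
    qed
    have "s P = gmap r k (A 0) P" for P
    proof (cases "P \<in> MProj r")
      case True
      then obtain i where i: "i \<le> r" "xpow i 1 \<notin> P" by (rule MProj_cover)
      then show ?thesis using A_sec[OF i(1) True i(2)] same[OF i(1)] True by (simp add: gmap_def)
    qed (simp add: off gmap_def)
    then show ?thesis using A_hdeg[OF le0] by blast
  qed
qed

lemma gmap_bij_betw:
  "r \<ge> 1 \<Longrightarrow> bij_betw (gmap r k) {a :: 'b::{comm_monoid_mult,mult_zero} melem. hdeg r k a} (Gamma r k)"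
  unfolding bij_betw_def using gmap_inj_on Gamma_subset_gmap_image gmap_in_Gamma by blast

lemma sact_gmap:
  assumes a: "hdeg r (int i) a" and b: "hdeg r k b"
  shows "sact r (k + int i) a (gmap r k b) = gmap r (k + int i) (amul a b)"
proof
  fix P
  show "sact r (k + int i) a (gmap r k b) P = gmap r (k + int i) (amul a b) P"
  proof (cases "P \<in> MProj r")
    case True
    have P: "is_prime r P" using True by (rule MProj_is_prime)
    have A: "a \<in> Acar r" "b \<in> Acar r" using a b hdeg_in_Acar by blast+
    define C where "C = frac_class r (k + int i) P (amul a b) aone"
    have "frac_class r (k + int i) P (amul a x) t = C" if xt: "(x, t) \<in> frac_class r k P b aone" for x t
    proof -
      from xt have t: "t \<in> Acar r" "t \<notin> P" and "\<exists>d::nat. hdeg r (int d + k) x"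
        unfolding frac_class_def by auto
      then have x: "x \<in> Acar r" using hdeg_in_Acar by blast
      obtain w where w: "w \<in> Acar r" "w \<notin> P" "amul w (amul b t) = amul w (amul x aone)"
        using frac_class_memD[OF xt] by blast
      have "amul w (amul (amul a x) aone) = amul a (amul w (amul x aone))" by (simp add: amul_ac)
      also have "\<dots> = amul a (amul w (amul b t))" using w(3) by simp
      also have "\<dots> = amul w (amul (amul a b) t)" by (simp add: amul_ac)
      finally have "amul w (amul (amul a x) aone) = amul w (amul (amul a b) t)" .
      then show ?thesis unfolding C_def
        using frac_class_eq[OF P amul_in_Acar[OF A(1) x] t(1) amul_in_Acar[OF A] aone_in_Acar t(2)
            is_prime_aone_notin[OF P] w(1,2)] by blast
    qed
    moreover have "(b, aone) \<in> frac_class r k P b aone"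
      using frac_class_self[OF aone_in_Acar is_prime_aone_notin[OF P] hdeg_aone] b by simp
    ultimately have "{frac_class r (k + int i) P (amul a x) t | x t. (x, t) \<in> frac_class r k P b aone} = {C}"
      by blast
    then show ?thesis using True unfolding sact_def gmap_def C_def by simp
  qed (simp add: sact_def gmap_def)
qed

theorem mainTheorem7:
  fixes r :: nat and n :: int
    and B_witness :: "'b::{comm_monoid_mult,mult_zero} itself"
  assumes "r \<ge> 1"
  shows "(\<forall>m::int.
            bij_betw (gmap r (n + m)) {a :: 'b melem. hdeg r (n + m) a} (Gamma r (n + m)))
       \<and> (\<forall>m::int. \<forall>i::nat. \<forall>a b :: 'b melem. hdeg r (int i) a \<longrightarrow> hdeg r (n + m) b \<longrightarrow>
            sact r (n + m + int i) a (gmap r (n + m) b) = gmap r (n + m + int i) (amul a b))"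
  using gmap_bij_betw[OF assms] sact_gmap by blast

end
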